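(* Let $\mathcal T=LI([0,1])\cup\mathcal K$ be the extension of linear arithmetic over the real interval $[0,1]$ by a unary function symbol $f$ satisfying $\mathcal K=\{\forall x,y\,(x\le y\to f(x)\le f(y)),\ \forall x\,(f(x)\le 1)\}$, with $f$ uninterpreted and the arithmetic symbols interpreted. Let $G=(a\le b)\wedge(b\le f(b))$ with constants $a,b$. Then $G\models_{\mathcal T}a\le f^n(1)$ for every $n\in\mathbb N$, and no (finite) quantifier-free formula is a $\mathcal T$-general uniform interpolant of $G$ w.r.t. $\Sigma_s\cup C_s$ with $\Sigma_s=\{f\}$, $C_s=\{a\}$.
   Context: General uniform interpolant: for a theory $\mathcal T$ whose signature splits into interpreted symbols $\Pi_0$ and uninterpreted function symbols, a quantifier-free formula $\phi$ with additional constants $C$, and sets $\Sigma_s$, $C_s$ of uninterpreted function symbols and constants occurring in $\phi$: a quantifier-free formula $\psi$ over $\Pi_0\cup\Sigma_s$ with constants only from $C_s$ is a $\mathcal T$-general uniform interpolant of $\phi$ w.r.t. $\Sigma_s\cup C_s$ if $\phi\models_{\mathcal T}\psi$ and for every ground $\theta$ sharing with $\phi$ only $\Pi_0$-symbols, symbols of $\Sigma_s$ and constants of $C_s$, $\phi\models_{\mathcal T}\theta$ implies $\psi\models_{\mathcal T}\theta$. $f^n$ denotes $n$-fold iteration of $f$. *)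

theory Defs
  imports Complex_Main
begin

datatype tm =
    Cst nat
  | Num rat
  | Add tm tm
  | Scl rat tm
  | F tm

datatype fm =
    TT | FF
  | Le tm tm | Lt tm tm | Eq tm tm
  | Neg fm | Conj fm fm | Disj fm fm | Imp fm fm

primrec evt :: "(real \<Rightarrow> real) \<Rightarrow> (nat \<Rightarrow> real) \<Rightarrow> tm \<Rightarrow> real" where
  "evt f v (Cst c) = v c"
| "evt f v (Num q) = of_rat q"
| "evt f v (Add s t) = evt f v s + evt f v t"
| "evt f v (Scl q t) = of_rat q * evt f v t"
| "evt f v (F t) = f (evt f v t)"

primrec evf :: "(real \<Rightarrow> real) \<Rightarrow> (nat \<Rightarrow> real) \<Rightarrow> fm \<Rightarrow> bool" where
  "evf f v TT = True"
| "evf f v FF = False"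
| "evf f v (Le s t) = (evt f v s \<le> evt f v t)"
| "evf f v (Lt s t) = (evt f v s < evt f v t)"
| "evf f v (Eq s t) = (evt f v s = evt f v t)"
| "evf f v (Neg p) = (\<not> evf f v p)"
| "evf f v (Conj p q) = (evf f v p \<and> evf f v q)"
| "evf f v (Disj p q) = (evf f v p \<or> evf f v q)"
| "evf f v (Imp p q) = (evf f v p \<longrightarrow> evf f v q)"

primrec consts_tm :: "tm \<Rightarrow> nat set" where
  "consts_tm (Cst c) = {c}"
| "consts_tm (Num q) = {}"
| "consts_tm (Add s t) = consts_tm s \<union> consts_tm t"
| "consts_tm (Scl q t) = consts_tm t"
| "consts_tm (F t) = consts_tm t"

primrec consts_fm :: "fm \<Rightarrow> nat set" where
  "consts_fm TT = {}"
| "consts_fm FF = {}"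
| "consts_fm (Le s t) = consts_tm s \<union> consts_tm t"
| "consts_fm (Lt s t) = consts_tm s \<union> consts_tm t"
| "consts_fm (Eq s t) = consts_tm s \<union> consts_tm t"
| "consts_fm (Neg p) = consts_fm p"
| "consts_fm (Conj p q) = consts_fm p \<union> consts_fm q"
| "consts_fm (Disj p q) = consts_fm p \<union> consts_fm q"
| "consts_fm (Imp p q) = consts_fm p \<union> consts_fm q"

definition T_model :: "(real \<Rightarrow> real) \<Rightarrow> (nat \<Rightarrow> real) \<Rightarrow> bool" where
  "T_model f v \<longleftrightarrow>
     (\<forall>c. v c \<in> {0..1}) \<and>
     (\<forall>x\<in>{0..1}. f x \<in> {0..1}) \<and>
     (\<forall>x\<in>{0..1}. \<forall>y\<in>{0..1}. x \<le> y \<longrightarrow> f x \<le> f y) \<and>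
     (\<forall>x\<in>{0..1}. f x \<le> 1)"

definition entails_T :: "fm \<Rightarrow> fm \<Rightarrow> bool" (infix "\<Turnstile>\<^sub>T" 50) where
  "\<phi> \<Turnstile>\<^sub>T \<theta> \<longleftrightarrow> (\<forall>f v. T_model f v \<longrightarrow> evf f v \<phi> \<longrightarrow> evf f v \<theta>)"

text \<open>General uniform interpolant w.r.t. \<Sigma>_s \<union> C_s, where \<Sigma>_s = {f} (the only
  uninterpreted function symbol, so it may occur freely) and C_s = Cs.\<close>
definition is_gen_unif_interpolant :: "fm \<Rightarrow> nat set \<Rightarrow> fm \<Rightarrow> bool" where
  "is_gen_unif_interpolant \<phi> Cs \<psi> \<longleftrightarrow>
     consts_fm \<psi> \<subseteq> Cs \<and>
     \<phi> \<Turnstile>\<^sub>T \<psi> \<and>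
     (\<forall>\<theta>. consts_fm \<theta> \<inter> consts_fm \<phi> \<subseteq> Cs \<longrightarrow> \<phi> \<Turnstile>\<^sub>T \<theta> \<longrightarrow> \<psi> \<Turnstile>\<^sub>T \<theta>)"

definition ca :: tm where "ca = Cst 0"
definition cb :: tm where "cb = Cst 1"

definition G :: fm where "G = Conj (Le ca cb) (Le cb (F cb))"

end

theory Submission
  imports Defs
begin

(* Every model of G satisfies a <= b <= f^n(1), so G entails all the formulas
   a <= f^n(1).  Suppose psi were a uniform interpolant and let K be the number of
   occurrences of f in psi.  In the model f(x) = max 0 (x - d), a = 1/2 with
   d = 1/(4(K+1)), the formula a <= f^(2K+3)(1) fails, yet psi holds there: psi
   queries f at no more than K points, so f can be made constant on some short
   interval [p, p + d] in [1/2, 1] avoiding these points; setting b = p then gives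
   a model of G that psi cannot distinguish from the original one. *)

primrec f_args_tm :: "(real \<Rightarrow> real) \<Rightarrow> (nat \<Rightarrow> real) \<Rightarrow> tm \<Rightarrow> real list" where
  "f_args_tm f v (Cst c) = []"
| "f_args_tm f v (Num q) = []"
| "f_args_tm f v (Add s t) = f_args_tm f v s @ f_args_tm f v t"
| "f_args_tm f v (Scl q t) = f_args_tm f v t"
| "f_args_tm f v (F t) = evt f v t # f_args_tm f v t"

primrec f_args_fm :: "(real \<Rightarrow> real) \<Rightarrow> (nat \<Rightarrow> real) \<Rightarrow> fm \<Rightarrow> real list" where
  "f_args_fm f v TT = []"
| "f_args_fm f v FF = []"
| "f_args_fm f v (Le s t) = f_args_tm f v s @ f_args_tm f v t"
| "f_args_fm f v (Lt s t) = f_args_tm f v s @ f_args_tm f v t"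
| "f_args_fm f v (Eq s t) = f_args_tm f v s @ f_args_tm f v t"
| "f_args_fm f v (Neg p) = f_args_fm f v p"
| "f_args_fm f v (Conj p q) = f_args_fm f v p @ f_args_fm f v q"
| "f_args_fm f v (Disj p q) = f_args_fm f v p @ f_args_fm f v q"
| "f_args_fm f v (Imp p q) = f_args_fm f v p @ f_args_fm f v q"

primrec f_count_tm :: "tm \<Rightarrow> nat" where
  "f_count_tm (Cst c) = 0"
| "f_count_tm (Num q) = 0"
| "f_count_tm (Add s t) = f_count_tm s + f_count_tm t"
| "f_count_tm (Scl q t) = f_count_tm t"
| "f_count_tm (F t) = Suc (f_count_tm t)"

primrec f_count_fm :: "fm \<Rightarrow> nat" where
  "f_count_fm TT = 0"
| "f_count_fm FF = 0"
| "f_count_fm (Le s t) = f_count_tm s + f_count_tm t"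
| "f_count_fm (Lt s t) = f_count_tm s + f_count_tm t"
| "f_count_fm (Eq s t) = f_count_tm s + f_count_tm t"
| "f_count_fm (Neg p) = f_count_fm p"
| "f_count_fm (Conj p q) = f_count_fm p + f_count_fm q"
| "f_count_fm (Disj p q) = f_count_fm p + f_count_fm q"
| "f_count_fm (Imp p q) = f_count_fm p + f_count_fm q"

lemma length_f_args_tm: "length (f_args_tm f v t) = f_count_tm t"
  by (induction t) auto

lemma length_f_args_fm: "length (f_args_fm f v p) = f_count_fm p"
  by (induction p) (auto simp: length_f_args_tm)

lemma evt_cong_f_args:
  "\<forall>x\<in>set (f_args_tm g v t). f x = g x \<Longrightarrow> evt f v t = evt g v t"
  by (induction t) auto

lemma evf_cong_f_args:
  "\<forall>x\<in>set (f_args_fm g v p). f x = g x \<Longrightarrow> evf f v p = evf g v p"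
  by (induction p) (simp_all add: evt_cong_f_args[where f = f and g = g])

lemma evt_cong_consts:
  "\<forall>c\<in>consts_tm t. v c = w c \<Longrightarrow> evt f v t = evt f w t"
  by (induction t) auto

lemma f_args_tm_cong_consts:
  "\<forall>c\<in>consts_tm t. v c = w c \<Longrightarrow> f_args_tm f v t = f_args_tm f w t"
  by (induction t) (simp_all add: evt_cong_consts[where v = v and w = w])

lemma evf_cong_consts:
  "\<forall>c\<in>consts_fm p. v c = w c \<Longrightarrow> evf f v p = evf f w p"
  by (induction p) (simp_all add: evt_cong_consts[where v = v and w = w])

lemma f_args_fm_cong_consts:
  "\<forall>c\<in>consts_fm p. v c = w c \<Longrightarrow> f_args_fm f v p = f_args_fm f w p"
  by (induction p) (simp_all add: f_args_tm_cong_consts[where v = v and w = w])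

lemma evt_funpow_F: "evt f v ((F ^^ n) t) = (f ^^ n) (evt f v t)"
  by (induction n) auto

lemma consts_tm_funpow_F: "consts_tm ((F ^^ n) t) = consts_tm t"
  by (induction n) auto

lemma le_funpow_one:
  fixes f :: "real \<Rightarrow> real"
  assumes into: "\<forall>x\<in>{0..1}. f x \<in> {0..1}"
    and mono: "\<forall>x\<in>{0..1}. \<forall>y\<in>{0..1}. x \<le> y \<longrightarrow> f x \<le> f y"
    and b: "b \<in> {0..1}" "b \<le> f b"
  shows "b \<le> (f ^^ n) 1"
proof -
  have "(f ^^ n) 1 \<in> {0..1} \<and> b \<le> (f ^^ n) 1"
  proof (induction n)
    case 0
    then show ?case using b by auto
  next
    case (Suc n)
    then have "f b \<le> f ((f ^^ n) 1)" using mono b by blast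
    then show ?case using Suc into b by auto
  qed
  then show ?thesis ..
qed

lemma G_entails_a_le_funpow_F_one: "G \<Turnstile>\<^sub>T Le ca ((F ^^ n) (Num 1))"
  unfolding entails_T_def
proof (intro allI impI)
  fix f v
  assume "T_model f v" and "evf f v G"
  then have "v 0 \<le> v 1" and "v 1 \<le> (f ^^ n) 1"
    using le_funpow_one[of f "v 1"] by (auto simp: G_def ca_def cb_def T_model_def)
  then show "evf f v (Le ca ((F ^^ n) (Num 1)))"
    by (simp add: evt_funpow_F ca_def)
qed

lemma interval_avoiding_finite_set:
  fixes d c :: real and S :: "real set"
  assumes "finite S" "card S \<le> K" "d > 0"
  shows "\<exists>j\<le>K. {c + 2 * real j * d .. c + 2 * real j * d + d} \<inter> S = {}"
proof (rule ccontr)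
  define I where "I j = {c + 2 * real j * d .. c + 2 * real j * d + d}" for j
  assume "\<not> ?thesis"
  then have "\<forall>j\<le>K. I j \<inter> S \<noteq> {}" by (simp add: I_def)
  then have "\<forall>j\<le>K. \<exists>s. s \<in> S \<inter> I j" by blast
  then obtain sel where sel: "\<And>j. j \<le> K \<Longrightarrow> sel j \<in> S \<inter> I j"
    by metis
  have "inj_on sel {..K}"
  proof (rule inj_onI)
    fix i j
    assume "i \<in> {..K}" "j \<in> {..K}" "sel i = sel j"
    then have "2 * real i * d \<le> (2 * real j + 1) * d" "2 * real j * d \<le> (2 * real i + 1) * d"
      using sel[of i] sel[of j] by (auto simp: I_def algebra_simps)
    then have "2 * real i \<le> 2 * real j + 1" "2 * real j \<le> 2 * real i + 1"
      using \<open>d > 0\<close> by simp_all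
    then show "i = j" by linarith
  qed
  then have "Suc K = card (sel ` {..K})" by (simp add: card_image)
  also have "\<dots> \<le> card S" using sel by (intro card_mono \<open>finite S\<close>) auto
  finally show False using \<open>card S \<le> K\<close> by simp
qed

definition shift_down :: "real \<Rightarrow> real \<Rightarrow> real" where
  "shift_down d x = max 0 (x - d)"

lemma funpow_shift_down:
  assumes "d \<ge> 0" "x \<ge> 0"
  shows "(shift_down d ^^ n) x = max 0 (x - real n * d)"
proof (induction n)
  case (Suc n)
  then show ?case using assms by (simp add: shift_down_def max_def algebra_simps)
qed (use assms in simp)

lemma T_model_shift_down:
  assumes "d \<ge> 0" "\<forall>c. v c \<in> {0..1}"
  shows "T_model (shift_down d) v"
  using assms by (auto simp: T_model_def shift_down_def)

text \<open>Flattening f = shift_down d to the constant p on [p, p + d] keeps it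
  monotone, because f(p + d) = p.\<close>

lemma G_model_flatten_shift_down:
  fixes p d :: real
  defines "h \<equiv> \<lambda>x. if p \<le> x \<and> x \<le> p + d then p else shift_down d x"
  assumes "d \<ge> 0" "0 \<le> p" "p + d \<le> 1" "\<forall>c. v c \<in> {0..1}" "v 0 \<le> p"
  shows "T_model h (v(1 := p))" and "evf h (v(1 := p)) G"
  using assms by (auto simp: T_model_def shift_down_def h_def G_def ca_def cb_def)

lemma consequence_of_G_holds_in_shift_down:
  assumes "G \<Turnstile>\<^sub>T \<psi>" "consts_fm \<psi> \<subseteq> {0}"
    and "d > 0" "4 * (real (f_count_fm \<psi>) + 1) * d \<le> 1"
  shows "evf (shift_down d) (\<lambda>_. 1/2) \<psi>"
proof -
  define K where "K = f_count_fm \<psi>"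
  define v where "v = (\<lambda>_::nat. 1/2 :: real)"
  define S where "S = set (f_args_fm (shift_down d) v \<psi>)"
  have "card S \<le> K"
    unfolding S_def K_def by (metis card_length length_f_args_fm)
  then obtain j where "j \<le> K"
    and avoid: "{1/2 + 2 * real j * d .. 1/2 + 2 * real j * d + d} \<inter> S = {}"
    using interval_avoiding_finite_set \<open>d > 0\<close> S_def by blast
  define p where "p = 1/2 + 2 * real j * d"
  have "real j * d \<le> real K * d" using \<open>j \<le> K\<close> \<open>d > 0\<close> by simp
  moreover have "4 * (real K * d) + 4 * d \<le> 1"
    using assms(4) unfolding K_def by (simp add: algebra_simps)
  moreover have "0 \<le> real j * d" using \<open>d > 0\<close> by simp
  ultimately have p: "1/2 \<le> p" "p + d \<le> 1"
    using \<open>d > 0\<close> unfolding p_def mult.assoc by linarith+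
  define h where "h = (\<lambda>x. if p \<le> x \<and> x \<le> p + d then p else shift_down d x)"
  have v_p: "\<forall>c\<in>consts_fm \<psi>. (v(1 := p)) c = v c" using assms(2) by auto
  have "evf h (v(1 := p)) \<psi>"
    using assms(1) G_model_flatten_shift_down[of d p v] p \<open>d > 0\<close>
    unfolding entails_T_def h_def v_def by auto
  moreover have "\<forall>x\<in>S. h x = shift_down d x"
    using avoid unfolding h_def p_def by auto
  moreover have "set (f_args_fm (shift_down d) (v(1 := p)) \<psi>) = S"
    unfolding S_def f_args_fm_cong_consts[OF v_p] ..
  ultimately have "evf (shift_down d) (v(1 := p)) \<psi>"
    using evf_cong_f_args by blast
  then have "evf (shift_down d) v \<psi>" unfolding evf_cong_consts[OF v_p] .
  then show ?thesis unfolding v_def .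
qed

lemma shift_down_refutes_a_le_funpow_F_one:
  assumes "d \<ge> 0" "1 < 2 * real n * d"
  shows "\<not> evf (shift_down d) (\<lambda>_. 1/2) (Le ca ((F ^^ n) (Num 1)))"
proof -
  have "(shift_down d ^^ n) 1 = max 0 (1 - real n * d)"
    using assms(1) by (simp add: funpow_shift_down)
  also have "\<dots> < 1/2" using assms(2) by (simp add: mult.assoc max_def)
  finally have "(shift_down d ^^ n) 1 < 1/2" .
  then show ?thesis by (simp add: evt_funpow_F ca_def)
qed

theorem mainTheorem6:
  shows "(\<forall>n::nat. G \<Turnstile>\<^sub>T Le ca ((F ^^ n) (Num 1)))
         \<and> \<not> (\<exists>\<psi>. is_gen_unif_interpolant G {0} \<psi>)"
proof (intro conjI allI notI)
  show "G \<Turnstile>\<^sub>T Le ca ((F ^^ n) (Num 1))" for n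
    by (rule G_entails_a_le_funpow_F_one)
next
  assume "\<exists>\<psi>. is_gen_unif_interpolant G {0} \<psi>"
  then obtain \<psi> where \<psi>_consts: "consts_fm \<psi> \<subseteq> {0}" and "G \<Turnstile>\<^sub>T \<psi>"
    and uniform: "\<And>\<theta>. consts_fm \<theta> \<inter> consts_fm G \<subseteq> {0} \<Longrightarrow> G \<Turnstile>\<^sub>T \<theta> \<Longrightarrow> \<psi> \<Turnstile>\<^sub>T \<theta>"
    unfolding is_gen_unif_interpolant_def by blast
  define K where "K = f_count_fm \<psi>"
  define d :: real where "d = 1 / (4 * (real K + 1))"
  define n where "n = 2 * K + 3"
  have "d > 0" and "1 < 2 * real n * d"
    by (simp_all add: d_def n_def field_simps)
  have "\<psi> \<Turnstile>\<^sub>T Le ca ((F ^^ n) (Num 1))"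
    by (rule uniform[OF _ G_entails_a_le_funpow_F_one])
      (auto simp: consts_tm_funpow_F ca_def)
  moreover have "evf (shift_down d) (\<lambda>_. 1/2) \<psi>"
    using consequence_of_G_holds_in_shift_down[OF \<open>G \<Turnstile>\<^sub>T \<psi>\<close> \<psi>_consts \<open>d > 0\<close>]
    by (simp add: d_def K_def)
  moreover have "T_model (shift_down d) (\<lambda>_. 1/2)"
    using \<open>d > 0\<close> by (simp add: T_model_shift_down)
  ultimately show False
    using shift_down_refutes_a_le_funpow_F_one \<open>d > 0\<close> \<open>1 < 2 * real n * d\<close>
    unfolding entails_T_def by (meson less_imp_le)
qed

end
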